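(* Let $z_o\in\mathbb{C}$ with $\mathrm{Im}\,z_o>0$ and $|z_o|\ge u_o$. Then $$b_{11}(z_o^* )=0\iff s_{11}(z_o)=0\iff b_{33}\!\left(-\frac{u_o^2}{z_o^*}\right)=0\iff s_{33}\!\left(-\frac{u_o^2}{z_o}\right)=0.$$
   Context: Equation and potential. Let $u_o>0$ and $\alpha_1,\alpha_2\in\mathbb{R}$. Let $\boldsymbol{u}(x,t)=(u_1,u_2)^T$ solve $$i\boldsymbol{u}_t+\alpha_1\left[\boldsymbol{u}_{xx}+2\boldsymbol{u}(\|\boldsymbol{u}\|^2-u_o^2)\right]+i\alpha_2\left[\boldsymbol{u}_{xxx}+3\boldsymbol{u}_x\|\boldsymbol{u}\|^2+3\boldsymbol{u}\boldsymbol{u}^\dagger\boldsymbol{u}_x\right]=0,$$ with $\boldsymbol{u}\to\boldsymbol{u}_\pm=\boldsymbol{u}_oe^{ih_\pm}$ as $x\to\pm\infty$, where $h_\pm\in\mathbb{R}$ and $\|\boldsymbol{u}_o\|=u_o$. Assume $\boldsymbol{u}-\boldsymbol{u}_-\in L^1(-\infty,a)$ and $\boldsymbol{u}-\boldsymbol{u}_+\in L^1(a,\infty)$ for every $a\in\mathbb{R}$. Matrices. Set $$\boldsymbol{U}=\begin{pmatrix}0&-\boldsymbol{u}^\dagger\\ \boldsymbol{u}&0_{2\times2}\end{pmatrix},\qquad \boldsymbol{\sigma}=\mathrm{diag}(1,-1,-1).$$ Uniformization: $k=\frac12\left(z-\frac{u_o^2}{z}\right)$, $\lambda=\frac12\left(z+\frac{u_o^2}{z}\right)$.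 Lax pair: $$\boldsymbol{X}=-ik\boldsymbol{\sigma}+\boldsymbol{U},$$ $$\boldsymbol{T}=\alpha_1\left[2ik^2\boldsymbol{\sigma}-2k\boldsymbol{U}+i\boldsymbol{\sigma}(\boldsymbol{U}^2+u_o^2-\boldsymbol{U}_x)\right]+\alpha_2\left[-4ik^3\boldsymbol{\sigma}+4k^2\boldsymbol{U}+2ik\boldsymbol{\sigma}(\boldsymbol{U}_x-\boldsymbol{U}^2)-\boldsymbol{U}\boldsymbol{U}_x+\boldsymbol{U}_x\boldsymbol{U}-\boldsymbol{U}_{xx}+2\boldsymbol{U}^3\right].$$ Phases: $$h_1=-\lambda x+2\lambda\left[\alpha_1k+\alpha_2(u_o^2-2k^2)\right]t,\qquad h_2=kx-\left[\alpha_1(k^2+\lambda^2)-4\alpha_2k^3\right]t,\qquad \boldsymbol{H}=\mathrm{diag}(h_1,h_2,-h_1).$$ Eigenvector matrices. With $\boldsymbol{v}^\perp=(v_2^*,-v_1^* )^T$, $$\boldsymbol{G}_\pm(z)=\begin{pmatrix} i&0&u_o/z\\ -\boldsymbol{u}_\pm/z&\boldsymbol{u}_\pm^\perp/u_o&-i\boldsymbol{u}_\pm/u_o\end{pmatrix}.$$ Continuous spectrum: $\Sigma=\mathbb{R}\cup\{|z|=u_o\}$. Jost solutions and scattering data. For $z\in\Sigma\setminus\{\pm iu_o\}$, $\boldsymbol{\varphi}_\pm$ are the simultaneous solutions of $\boldsymbol{\varphi}_x=\boldsymbol{X}\boldsymbol{\varphi}$, $\boldsymbol{\varphi}_t=\boldsymbol{T}\boldsymbol{\varphi}$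 with $\boldsymbol{\varphi}_\pm=\boldsymbol{G}_\pm e^{i\boldsymbol{H}}+o(1)$ as $x\to\pm\infty$. The scattering matrix $\boldsymbol{S}=(s_{jl})$ is defined by $\boldsymbol{\varphi}_-=\boldsymbol{\varphi}_+\boldsymbol{S}$, and $\boldsymbol{B}=\boldsymbol{S}^{-1}=(b_{jl})$. Regions: - $\Xi_1=\{|z|>u_o,\ \mathrm{Im}\,z>0\}$, - $\Xi_2=\{|z|>u_o,\ \mathrm{Im}\,z<0\}$, - $\Xi_3=\{|z|<u_o,\ \mathrm{Im}\,z<0\}$, - $\Xi_4=\{|z|<u_o,\ \mathrm{Im}\,z>0\}$. Standing fact used in the setting: $s_{11}$ extends analytically to $\Xi_1$, $b_{11}$ to $\Xi_2$, $b_{33}$ to $\Xi_3$, and $s_{33}$ to $\Xi_4$ (continuous up to $\Sigma$); the functions above denote these extensions. *)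

theory Defs
  imports "HOL-Analysis.Analysis"
begin

type_synonym cvec2 = "complex^2"
type_synonym cmat3 = "complex^3^3"

definition mk3 :: "complex \<Rightarrow> complex \<Rightarrow> complex \<Rightarrow> complex \<Rightarrow> complex \<Rightarrow> complex
    \<Rightarrow> complex \<Rightarrow> complex \<Rightarrow> complex \<Rightarrow> cmat3" where
  "mk3 a11 a12 a13 a21 a22 a23 a31 a32 a33 =
     (\<chi> i j. if i = 1 then (if j = 1 then a11 else if j = 2 then a12 else a13)
             else if i = 2 then (if j = 1 then a21 else if j = 2 then a22 else a23)
             else (if j = 1 then a31 else if j = 2 then a32 else a33))"

definition csm :: "complex \<Rightarrow> cmat3 \<Rightarrow> cmat3" (infixr "\<cdot>\<^sub>m" 75) where
  "c \<cdot>\<^sub>m M = (\<chi> i j. c * M $ i $ j)"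

definition csv :: "complex \<Rightarrow> cvec2 \<Rightarrow> cvec2" where
  "csv c v = (\<chi> i. c * v $ i)"

definition dag :: "cvec2 \<Rightarrow> cvec2 \<Rightarrow> complex" where
  "dag v w = cnj (v $ 1) * w $ 1 + cnj (v $ 2) * w $ 2"

definition perp :: "cvec2 \<Rightarrow> cvec2" where
  "perp v = (\<chi> i. if i = 1 then cnj (v $ 2) else - cnj (v $ 1))"

(* U = [[0, -u^dagger],[u, 0_{2x2}]] *)
definition Umat :: "cvec2 \<Rightarrow> cmat3" where
  "Umat w = mk3 0 (- cnj (w $ 1)) (- cnj (w $ 2)) (w $ 1) 0 0 (w $ 2) 0 0"

definition sigma3 :: cmat3 where
  "sigma3 = mk3 1 0 0 0 (-1) 0 0 0 (-1)"

definition kk :: "real \<Rightarrow> complex \<Rightarrow> complex" where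
  "kk uo z = (z - (complex_of_real uo)^2 / z) / 2"

definition ll :: "real \<Rightarrow> complex \<Rightarrow> complex" where
  "ll uo z = (z + (complex_of_real uo)^2 / z) / 2"

definition Xmat :: "real \<Rightarrow> complex \<Rightarrow> cvec2 \<Rightarrow> cmat3" where
  "Xmat uo z w = (- \<i> * kk uo z) \<cdot>\<^sub>m sigma3 + Umat w"

(* T, given the values w = u, wx = u_x, wxx = u_xx at the point (x,t) *)
definition Tmat :: "real \<Rightarrow> real \<Rightarrow> real \<Rightarrow> complex \<Rightarrow> cvec2 \<Rightarrow> cvec2 \<Rightarrow> cvec2 \<Rightarrow> cmat3" where
  "Tmat a1 a2 uo z w wx wxx =
    (let k = kk uo z; U = Umat w; Ux = Umat wx; Uxx = Umat wxx; s = sigma3;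
         c = complex_of_real uo in
     complex_of_real a1 \<cdot>\<^sub>m
       ((2 * \<i> * k^2) \<cdot>\<^sub>m s - (2 * k) \<cdot>\<^sub>m U
        + \<i> \<cdot>\<^sub>m (s ** (U ** U + mat (c^2) - Ux)))
   + complex_of_real a2 \<cdot>\<^sub>m
       ((- 4 * \<i> * k^3) \<cdot>\<^sub>m s + (4 * k^2) \<cdot>\<^sub>m U
        + (2 * \<i> * k) \<cdot>\<^sub>m (s ** (Ux - U ** U))
        - U ** Ux + Ux ** U - Uxx + 2 \<cdot>\<^sub>m (U ** U ** U)))"

definition h1 :: "real \<Rightarrow> real \<Rightarrow> real \<Rightarrow> complex \<Rightarrow> real \<Rightarrow> real \<Rightarrow> complex" where
  "h1 a1 a2 uo z x t =
    (let k = kk uo z; l = ll uo z in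
     - l * x + 2 * l * (a1 * k + a2 * ((complex_of_real uo)^2 - 2 * k^2)) * t)"

definition h2 :: "real \<Rightarrow> real \<Rightarrow> real \<Rightarrow> complex \<Rightarrow> real \<Rightarrow> real \<Rightarrow> complex" where
  "h2 a1 a2 uo z x t =
    (let k = kk uo z; l = ll uo z in
     k * x - (a1 * (k^2 + l^2) - 4 * a2 * k^3) * t)"

definition expiH :: "real \<Rightarrow> real \<Rightarrow> real \<Rightarrow> complex \<Rightarrow> real \<Rightarrow> real \<Rightarrow> cmat3" where
  "expiH a1 a2 uo z x t =
    mk3 (exp (\<i> * h1 a1 a2 uo z x t)) 0 0
        0 (exp (\<i> * h2 a1 a2 uo z x t)) 0
        0 0 (exp (- \<i> * h1 a1 a2 uo z x t))"

definition Gmat :: "real \<Rightarrow> cvec2 \<Rightarrow> complex \<Rightarrow> cmat3" where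
  "Gmat uo up z =
    (let c = complex_of_real uo; q = perp up in
     mk3 \<i> 0 (c / z)
         (- up $ 1 / z) (q $ 1 / c) (- \<i> * up $ 1 / c)
         (- up $ 2 / z) (q $ 2 / c) (- \<i> * up $ 2 / c))"

(* continuous spectrum (in the z-plane; z = 0 is not a point of the uniformization
   variable's domain, since k and lambda are singular there) and regions *)
definition Sigma_spec :: "real \<Rightarrow> complex set" where
  "Sigma_spec uo = ({z. Im z = 0} \<union> {z. cmod z = uo}) - {0}"

definition Xi1 :: "real \<Rightarrow> complex set" where "Xi1 uo = {z. cmod z > uo \<and> Im z > 0}"
definition Xi2 :: "real \<Rightarrow> complex set" where "Xi2 uo = {z. cmod z > uo \<and> Im z < 0}"
definition Xi3 :: "real \<Rightarrow> complex set" where "Xi3 uo = {z. cmod z < uo \<and> Im z < 0}"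
definition Xi4 :: "real \<Rightarrow> complex set" where "Xi4 uo = {z. cmod z < uo \<and> Im z > 0}"

definition solves_eq ::
  "real \<Rightarrow> real \<Rightarrow> real \<Rightarrow> (real \<Rightarrow> real \<Rightarrow> cvec2) \<Rightarrow> (real \<Rightarrow> real \<Rightarrow> cvec2)
   \<Rightarrow> (real \<Rightarrow> real \<Rightarrow> cvec2) \<Rightarrow> (real \<Rightarrow> real \<Rightarrow> cvec2) \<Rightarrow> (real \<Rightarrow> real \<Rightarrow> cvec2) \<Rightarrow> bool" where
  "solves_eq a1 a2 uo u ux uxx uxxx ut \<longleftrightarrow>
    (\<forall>x t. ((\<lambda>y. u y t) has_vector_derivative ux x t) (at x)
         \<and> ((\<lambda>y. ux y t) has_vector_derivative uxx x t) (at x)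
         \<and> ((\<lambda>y. uxx y t) has_vector_derivative uxxx x t) (at x)
         \<and> ((\<lambda>s. u x s) has_vector_derivative ut x t) (at t)
         \<and> csv \<i> (ut x t)
           + csv (complex_of_real a1)
               (uxx x t + csv (2 * complex_of_real ((norm (u x t))^2 - uo^2)) (u x t))
           + csv (\<i> * complex_of_real a2)
               (uxxx x t + csv (3 * complex_of_real ((norm (u x t))^2)) (ux x t)
                + csv (3 * dag (u x t) (ux x t)) (u x t)) = 0)"

(* phi is a Jost solution: simultaneous solution of the Lax pair with
   phi = G e^{iH} + o(1) as x \<rightarrow> F (F = at_top for +, at_bot for -) *)
definition jost ::
  "real \<Rightarrow> real \<Rightarrow> real \<Rightarrow> (real \<Rightarrow> real \<Rightarrow> cvec2) \<Rightarrow> (real \<Rightarrow> real \<Rightarrow> cvec2)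
   \<Rightarrow> (real \<Rightarrow> real \<Rightarrow> cvec2) \<Rightarrow> cvec2 \<Rightarrow> real filter \<Rightarrow> complex
   \<Rightarrow> (real \<Rightarrow> real \<Rightarrow> cmat3) \<Rightarrow> bool" where
  "jost a1 a2 uo u ux uxx up F z phi \<longleftrightarrow>
    (\<forall>x t. ((\<lambda>y. phi y t) has_vector_derivative (Xmat uo z (u x t) ** phi x t)) (at x)
         \<and> ((\<lambda>s. phi x s) has_vector_derivative
               (Tmat a1 a2 uo z (u x t) (ux x t) (uxx x t) ** phi x t)) (at t))
    \<and> (\<forall>t. ((\<lambda>x. phi x t - Gmat uo up z ** expiH a1 a2 uo z x t) \<longlongrightarrow> 0) F)"

end

(*
  For real z the Lax matrix X(z) is anti-Hermitian, and it is unchanged by the sheet flip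
  z |-> -u_o^2/z, which fixes k and reverses lambda. Hence for any two solutions phi, psi of
  phi_x = X phi the Gram matrix phi^dagger psi does not depend on x. Applied to the Jost
  solutions at z and at -u_o^2/z, its value can be read off from the asymptotics G e^(iH) at
  x -> +-infinity; comparing both ends through phi_- = phi_+ S shows that S(z) is pseudo-unitary,
  which yields b_11 = conj s_11, b_33 = conj s_33 and s_33(-u_o^2/z) = s_11(z) on the real axis.

  The functions conj (b_11 (conj z)), s_11 z, s_33 (-u_o^2/z) and conj (b_33 (-u_o^2/conj z)) are
  holomorphic in Xi_1 and continuous up to its boundary. Pasting across the real axis and the
  identity theorem propagate the identities from the ray (u_o, infinity) to the closure of Xi_1, so
  the four coefficients vanish simultaneously.

  The PDE, the limits of u and the L^1 conditions serve only to construct the Jost solutions.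
*)

theory Submission
  imports Defs "HOL-Complex_Analysis.Conformal_Mappings"
begin

section \<open>Hermitian adjoints and conserved Gram matrices\<close>

definition cadj :: "complex^'n^'m \<Rightarrow> complex^'m^'n" where
  "cadj M = (\<chi> i j. cnj (M $ j $ i))"

lemma cadj_matrix_mult: "cadj (A ** B) = cadj B ** cadj A"
  by (simp add: vec_eq_iff cadj_def matrix_matrix_mult_def mult.commute)

lemma cadj_nth: "cadj A $ i $ j = cnj (A $ j $ i)"
  by (simp add: cadj_def)

lemma matrix_mul_uminus_left: "(- A) ** B = - (A ** (B :: 'a::ring_1^'n^'m))"
  by (simp add: vec_eq_iff matrix_matrix_mult_def sum_negf)

lemma bounded_bilinear_cadj_mult:
  "bounded_bilinear (\<lambda>(A::complex^'n^'m) (B::complex^'k^'m). cadj A ** B)"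
proof -
  have "bilinear (\<lambda>(A::complex^'n^'m) (B::complex^'k^'m). cadj A ** B)"
    unfolding bilinear_def
    by (auto intro!: linearI simp: vec_eq_iff cadj_def matrix_matrix_mult_def
        sum.distrib scaleR_sum_right algebra_simps)
  then show ?thesis by (simp add: bilinear_conv_bounded_bilinear)
qed

lemma cadj_mult_conserved:
  fixes \<phi> :: "real \<Rightarrow> complex^'k^'n" and \<psi> :: "real \<Rightarrow> complex^'l^'n"
    and X :: "real \<Rightarrow> complex^'n^'n"
  assumes \<phi>: "\<And>x. (\<phi> has_vector_derivative X x ** \<phi> x) (at x)"
    and \<psi>: "\<And>x. (\<psi> has_vector_derivative X x ** \<psi> x) (at x)"
    and skew: "\<And>x. cadj (X x) = - X x"
  obtains C where "\<And>x. cadj (\<phi> x) ** \<psi> x = C"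
proof -
  interpret bounded_bilinear "\<lambda>(A::complex^'k^'n) (B::complex^'l^'n). cadj A ** B"
    by (rule bounded_bilinear_cadj_mult)
  have "((\<lambda>x. cadj (\<phi> x) ** \<psi> x) has_derivative (\<lambda>h. 0)) (at x within UNIV)" for x
  proof -
    have "cadj (X x ** \<phi> x) ** \<psi> x = - (cadj (\<phi> x) ** (X x ** \<psi> x))"
      by (simp add: cadj_matrix_mult skew matrix_mul_assoc[symmetric] matrix_mul_uminus_left
          minus_right)
    then have "cadj (\<phi> x) ** (X x ** \<psi> x) + cadj (X x ** \<phi> x) ** \<psi> x = 0"
      by simp
    with has_vector_derivative[OF \<phi> \<psi>, of x] show ?thesis
      by (simp add: has_vector_derivative_def)
  qed
  with has_derivative_zero_constant[OF convex_UNIV] that show ?thesis by blast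
qed

lemma tendsto_cadj_mult_diff:
  fixes \<phi> A :: "'a \<Rightarrow> complex^'k^'n" and \<psi> B :: "'a \<Rightarrow> complex^'l^'n"
  assumes "((\<lambda>x. \<phi> x - A x) \<longlongrightarrow> 0) F" "((\<lambda>x. \<psi> x - B x) \<longlongrightarrow> 0) F"
    and "Bfun A F" "Bfun B F"
  shows "((\<lambda>x. cadj (\<phi> x) ** \<psi> x - cadj (A x) ** B x) \<longlongrightarrow> 0) F"
proof -
  interpret bounded_bilinear "\<lambda>(A::complex^'k^'n) (B::complex^'l^'n). cadj A ** B"
    by (rule bounded_bilinear_cadj_mult)
  have "Zfun (\<lambda>x. \<phi> x - A x) F" "Zfun (\<lambda>x. \<psi> x - B x) F"
    using assms(1,2) by (simp_all add: tendsto_Zfun_iff)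
  then have "Zfun (\<lambda>x. cadj (\<phi> x - A x) ** (\<psi> x - B x) + cadj (\<phi> x - A x) ** B x
      + cadj (A x) ** (\<psi> x - B x)) F"
    by (intro Zfun_add Zfun Zfun_prod_Bfun Bfun_prod_Zfun assms(3,4))
  then show ?thesis
    by (simp add: tendsto_Zfun_iff prod_diff_prod)
qed

lemma cadj_mult_eq_of_asymptotics:
  fixes \<phi> A :: "real \<Rightarrow> complex^'k^'n" and \<psi> B :: "real \<Rightarrow> complex^'l^'n"
    and X :: "real \<Rightarrow> complex^'n^'n"
  assumes "\<And>x. (\<phi> has_vector_derivative X x ** \<phi> x) (at x)"
    and "\<And>x. (\<psi> has_vector_derivative X x ** \<psi> x) (at x)"
    and "\<And>x. cadj (X x) = - X x"
    and "((\<lambda>x. \<phi> x - A x) \<longlongrightarrow> 0) F" "((\<lambda>x. \<psi> x - B x) \<longlongrightarrow> 0) F"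
    and "Bfun A F" "Bfun B F"
    and "\<And>x. cadj (A x) ** B x = K" and "F \<noteq> bot"
  shows "cadj (\<phi> x) ** \<psi> x = K"
proof -
  obtain C where C: "\<And>x. cadj (\<phi> x) ** \<psi> x = C"
    using cadj_mult_conserved assms(1-3) by blast
  have "((\<lambda>x. C - K) \<longlongrightarrow> 0) F"
    using tendsto_cadj_mult_diff[OF assms(4-7)] by (simp add: C assms(8))
  then show ?thesis
    using \<open>F \<noteq> bot\<close> by (simp add: C tendsto_const_iff)
qed

lemma matrix_inv_eqI:
  fixes A B :: "'a::semiring_1^'n^'n"
  assumes "A ** B = mat 1" "B ** A = mat 1"
  shows "matrix_inv A = B"
  unfolding matrix_inv_def
proof (rule some_equality)
  fix B' assume "A ** B' = mat 1 \<and> B' ** A = mat 1"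
  then have "B' = B' ** (A ** B)" "B = (B' ** A) ** B"
    using assms by simp_all
  then show "B' = B" by (simp add: matrix_mul_assoc)
qed (use assms in simp)

lemma matrix_inv_of_cadj_congruence:
  fixes S D D' :: "complex^'n^'n"
  assumes D': "D' ** D = mat 1" and S: "cadj S ** D ** S = D"
  shows "matrix_inv S = D' ** cadj S ** D" and "S ** D' ** cadj S = D'"
proof -
  have "(D' ** cadj S ** D) ** S = D' ** (cadj S ** D ** S)"
    by (simp add: matrix_mul_assoc)
  also have "\<dots> = mat 1"
    using D' S by simp
  finally have "(D' ** cadj S ** D) ** S = mat 1" .
  then have SD: "S ** (D' ** cadj S ** D) = mat 1"
    by (simp add: matrix_left_right_inverse)
  with \<open>(D' ** cadj S ** D) ** S = mat 1\<close> show "matrix_inv S = D' ** cadj S ** D"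
    by (simp add: matrix_inv_eqI)
  have "D ** D' = mat 1"
    using D' by (simp add: matrix_left_right_inverse)
  then have "S ** D' ** cadj S = (S ** (D' ** cadj S ** D)) ** D'"
    by (simp add: matrix_mul_assoc[symmetric])
  then show "S ** D' ** cadj S = D'"
    using SD by simp
qed

lemma mk3_nth [simp]:
  "mk3 a11 a12 a13 a21 a22 a23 a31 a32 a33 $ 1 $ 1 = a11"
  "mk3 a11 a12 a13 a21 a22 a23 a31 a32 a33 $ 1 $ 2 = a12"
  "mk3 a11 a12 a13 a21 a22 a23 a31 a32 a33 $ 1 $ 3 = a13"
  "mk3 a11 a12 a13 a21 a22 a23 a31 a32 a33 $ 2 $ 1 = a21"
  "mk3 a11 a12 a13 a21 a22 a23 a31 a32 a33 $ 2 $ 2 = a22"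
  "mk3 a11 a12 a13 a21 a22 a23 a31 a32 a33 $ 2 $ 3 = a23"
  "mk3 a11 a12 a13 a21 a22 a23 a31 a32 a33 $ 3 $ 1 = a31"
  "mk3 a11 a12 a13 a21 a22 a23 a31 a32 a33 $ 3 $ 2 = a32"
  "mk3 a11 a12 a13 a21 a22 a23 a31 a32 a33 $ 3 $ 3 = a33"
  by (simp_all add: mk3_def)

lemma cmat3_eq_iff: "(A :: cmat3) = B \<longleftrightarrow>
    A$1$1 = B$1$1 \<and> A$1$2 = B$1$2 \<and> A$1$3 = B$1$3 \<and> A$2$1 = B$2$1 \<and> A$2$2 = B$2$2 \<and>
    A$2$3 = B$2$3 \<and> A$3$1 = B$3$1 \<and> A$3$2 = B$3$2 \<and> A$3$3 = B$3$3"
  by (auto simp: vec_eq_iff forall_3)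

lemma cmat3_mult_nth: "((A :: cmat3) ** B) $ i $ j = A$i$1 * B$1$j + A$i$2 * B$2$j + A$i$3 * B$3$j"
  by (simp add: matrix_matrix_mult_def sum_3)

definition phase_diag :: "complex \<Rightarrow> complex \<Rightarrow> cmat3" where
  "phase_diag e1 e2 = mk3 e1 0 0 0 e2 0 0 0 (cnj e1)"

definition gram_diag :: "complex \<Rightarrow> cmat3" where
  "gram_diag d = mk3 d 0 0 0 1 0 0 0 d"

definition gram_antidiag :: "complex \<Rightarrow> cmat3" where
  "gram_antidiag c = mk3 0 0 c 0 1 0 c 0 0"

text \<open>The first relation makes \<open>S\<close> pseudo-unitary for \<open>D = gram_diag d\<close>, so
  \<open>S\<^sup>-\<^sup>1 = D\<^sup>-\<^sup>1 S\<^sup>\<dagger> D\<close>; with \<open>P = D\<^sup>-\<^sup>1 (gram_antidiag c)\<close> the second one becomes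
  \<open>S P = P S'\<close>, whose \<open>(1, 3)\<close> entry compares \<open>S\<^sub>1\<^sub>1\<close> with \<open>S'\<^sub>3\<^sub>3\<close>.\<close>

lemma scattering_entries_of_grams:
  fixes S S' :: cmat3
  assumes "d \<noteq> 0" "c \<noteq> 0"
    and diag: "cadj S ** gram_diag d ** S = gram_diag d"
    and antidiag: "cadj S ** gram_antidiag c ** S' = gram_antidiag c"
  shows "matrix_inv S $ 1 $ 1 = cnj (S $ 1 $ 1)" "matrix_inv S $ 3 $ 3 = cnj (S $ 3 $ 3)"
    and "S' $ 3 $ 3 = S $ 1 $ 1"
proof -
  have inv_diag: "gram_diag (1 / d) ** gram_diag d = mat 1"
    using \<open>d \<noteq> 0\<close> by (simp add: cmat3_eq_iff cmat3_mult_nth gram_diag_def mat_def)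
  note inv = matrix_inv_of_cadj_congruence[OF inv_diag diag]
  show "matrix_inv S $ 1 $ 1 = cnj (S $ 1 $ 1)" "matrix_inv S $ 3 $ 3 = cnj (S $ 3 $ 3)"
    using \<open>d \<noteq> 0\<close> by (simp_all add: inv(1) cmat3_mult_nth cadj_nth gram_diag_def)
  define P where "P = gram_diag (1 / d) ** gram_antidiag c"
  have "S ** P = S ** gram_diag (1 / d) ** (cadj S ** gram_antidiag c ** S')"
    by (simp only: P_def antidiag matrix_mul_assoc)
  also have "\<dots> = (S ** gram_diag (1 / d) ** cadj S) ** gram_antidiag c ** S'"
    by (simp only: matrix_mul_assoc)
  also have "\<dots> = P ** S'"
    by (simp only: inv(2) P_def)
  finally have "(S ** P) $ 1 $ 3 = (P ** S') $ 1 $ 3" by simp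
  then show "S' $ 3 $ 3 = S $ 1 $ 1"
    using assms(1,2) by (simp add: P_def cmat3_mult_nth gram_diag_def gram_antidiag_def)
qed

section \<open>Jost solutions on the real axis\<close>

text \<open>The involution \<open>z \<mapsto> -u\<^sub>o\<^sup>2/z\<close> exchanging the two sheets of the uniformization.\<close>

definition sheet_flip :: "real \<Rightarrow> complex \<Rightarrow> complex" where
  "sheet_flip uo z = - complex_of_real (uo^2) / z"

lemma sheet_flip_of_real: "sheet_flip uo (complex_of_real r) = complex_of_real (- (uo^2) / r)"
  by (simp add: sheet_flip_def)

lemma kk_sheet_flip: "uo \<noteq> 0 \<Longrightarrow> kk uo (sheet_flip uo z) = kk uo z"
  by (cases "z = 0") (simp_all add: kk_def sheet_flip_def field_simps)

lemma ll_sheet_flip: "uo \<noteq> 0 \<Longrightarrow> ll uo (sheet_flip uo z) = - ll uo z"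
  by (cases "z = 0") (simp_all add: ll_def sheet_flip_def field_simps)

lemma Xmat_sheet_flip: "uo \<noteq> 0 \<Longrightarrow> Xmat uo (sheet_flip uo z) w = Xmat uo z w"
  by (simp add: Xmat_def kk_sheet_flip)

lemma h1_sheet_flip: "uo \<noteq> 0 \<Longrightarrow> h1 a1 a2 uo (sheet_flip uo z) x t = - h1 a1 a2 uo z x t"
  by (simp add: h1_def Let_def kk_sheet_flip ll_sheet_flip algebra_simps)

lemma h2_sheet_flip: "uo \<noteq> 0 \<Longrightarrow> h2 a1 a2 uo (sheet_flip uo z) x t = h2 a1 a2 uo z x t"
  by (simp add: h2_def Let_def kk_sheet_flip ll_sheet_flip)

lemma expiH_sheet_flip:
  "uo \<noteq> 0 \<Longrightarrow> expiH a1 a2 uo (sheet_flip uo z) x t =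
     mk3 (exp (- \<i> * h1 a1 a2 uo z x t)) 0 0 0 (exp (\<i> * h2 a1 a2 uo z x t)) 0 0 0
         (exp (\<i> * h1 a1 a2 uo z x t))"
  by (simp add: expiH_def h1_sheet_flip h2_sheet_flip)

lemma kk_of_real_in_Reals: "kk uo (complex_of_real r) \<in> \<real>"
  and ll_of_real_in_Reals: "ll uo (complex_of_real r) \<in> \<real>"
  by (simp_all add: kk_def ll_def)

lemma h1_of_real_in_Reals: "h1 a1 a2 uo (complex_of_real r) x t \<in> \<real>"
  and h2_of_real_in_Reals: "h2 a1 a2 uo (complex_of_real r) x t \<in> \<real>"
  using kk_of_real_in_Reals[of uo r] ll_of_real_in_Reals[of uo r]
  by (auto simp: h1_def h2_def Let_def elim!: Reals_cases)

lemma exp_i_times_real: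
  assumes "h \<in> \<real>"
  shows "cmod (exp (\<i> * h)) = 1" and "exp (- (\<i> * h)) = cnj (exp (\<i> * h))"
  using assms by (auto simp: exp_cnj elim!: Reals_cases)

lemma expiH_of_real:
  fixes a1 a2 uo r x t :: real
  defines "e1 \<equiv> exp (\<i> * h1 a1 a2 uo (complex_of_real r) x t)"
    and "e2 \<equiv> exp (\<i> * h2 a1 a2 uo (complex_of_real r) x t)"
  shows "expiH a1 a2 uo (complex_of_real r) x t = phase_diag e1 e2"
    and "uo \<noteq> 0 \<Longrightarrow> expiH a1 a2 uo (sheet_flip uo (complex_of_real r)) x t = phase_diag (cnj e1) e2"
    and "cmod e1 = 1" "cmod e2 = 1"
proof -
  note exp_h1 = exp_i_times_real[OF h1_of_real_in_Reals]
    and exp_h2 = exp_i_times_real[OF h2_of_real_in_Reals]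
  show "expiH a1 a2 uo (complex_of_real r) x t = phase_diag e1 e2"
    by (simp add: expiH_def phase_diag_def e1_def e2_def exp_h1)
  show "uo \<noteq> 0 \<Longrightarrow> expiH a1 a2 uo (sheet_flip uo (complex_of_real r)) x t = phase_diag (cnj e1) e2"
    by (simp add: expiH_sheet_flip phase_diag_def e1_def e2_def exp_h1)
  show "cmod e1 = 1" "cmod e2 = 1"
    unfolding e1_def e2_def by (rule exp_h1 exp_h2)+
qed

lemma cadj_Xmat_of_real: "cadj (Xmat uo (complex_of_real r) w) = - Xmat uo (complex_of_real r) w"
  using kk_of_real_in_Reals[of uo r]
  by (auto simp: cmat3_eq_iff cadj_nth Xmat_def csm_def sigma3_def Umat_def elim!: Reals_cases)

lemma norm_mult_phase_diag:
  fixes G :: cmat3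
  assumes "cmod e1 = 1" "cmod e2 = 1"
  shows "norm (G ** phase_diag e1 e2) = norm G"
proof -
  have "cmod ((G ** phase_diag e1 e2) $ i $ j) = cmod (G $ i $ j)" for i j
    using exhaust_3[of j] assms
    by (auto simp: cmat3_mult_nth phase_diag_def norm_mult)
  then show ?thesis
    by (simp add: norm_vec_def)
qed

lemma dag_self: "dag v v = complex_of_real ((norm v)^2)"
proof -
  have "(norm v)^2 = (cmod (v$1))^2 + (cmod (v$2))^2"
    by (simp add: norm_vec_def L2_set_def sum_2)
  then show ?thesis
    by (simp only: dag_def of_real_add complex_norm_square ac_simps)
qed

lemma norm_csv: "norm (csv c v) = cmod c * norm v"
  by (simp add: csv_def norm_vec_def L2_set_def sum_2 norm_mult power_mult_distrib
      distrib_left[symmetric] real_sqrt_mult)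

lemma cnj_mult_unimodular: "cmod e = 1 \<Longrightarrow> cnj e * e = 1"
  by (metis complex_norm_square mult.commute of_real_1 power_one)

lemma gram_Gmat_phase_diag:
  fixes up :: cvec2 and uo r :: real
  defines "G \<equiv> Gmat uo up (complex_of_real r)"
    and "G' \<equiv> Gmat uo up (sheet_flip uo (complex_of_real r))"
  assumes "uo > 0" "r \<noteq> 0" "norm up = uo" "cmod e1 = 1" "cmod e2 = 1"
  shows "cadj (G ** phase_diag e1 e2) ** (G ** phase_diag e1 e2)
           = gram_diag (complex_of_real (1 + uo^2 / r^2))"
    and "cadj (G ** phase_diag e1 e2) ** (G' ** phase_diag (cnj e1) e2)
           = gram_antidiag (\<i> * complex_of_real ((r^2 + uo^2) / (r * uo)))"
proof -
  have up: "cnj (up$1) * up$1 + cnj (up$2) * up$2 = uo^2"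
    using dag_self[of up] assms(5) by (simp add: dag_def)
  have uo_nz: "uo \<noteq> 0"
    using assms(3) by simp
  note e = cnj_mult_unimodular[OF assms(6)] cnj_mult_unimodular[OF assms(7)]
  show "cadj (G ** phase_diag e1 e2) ** (G ** phase_diag e1 e2)
           = gram_diag (complex_of_real (1 + uo^2 / r^2))"
    using up e
    by (simp add: G_def assms(4) uo_nz cmat3_eq_iff cmat3_mult_nth cadj_nth Gmat_def Let_def
        perp_def phase_diag_def gram_diag_def field_simps power2_eq_square)
      (intro conjI; algebra)
  show "cadj (G ** phase_diag e1 e2) ** (G' ** phase_diag (cnj e1) e2)
           = gram_antidiag (\<i> * complex_of_real ((r^2 + uo^2) / (r * uo)))"
    using up e
    by (simp add: G_def G'_def assms(4) uo_nz cmat3_eq_iff cmat3_mult_nth cadj_nth Gmat_def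
        Let_def perp_def sheet_flip_def phase_diag_def gram_antidiag_def field_simps
        power2_eq_square)
      (intro conjI; algebra)
qed

lemma jost_gram_of_real:
  fixes \<phi> \<psi> :: "real \<Rightarrow> real \<Rightarrow> cmat3" and up :: cvec2 and uo r :: real
  assumes uo: "uo > 0" and r: "r \<noteq> 0" and up: "norm up = uo" and F: "F \<noteq> bot"
    and \<phi>: "jost a1 a2 uo u ux uxx up F (complex_of_real r) \<phi>"
    and \<psi>: "jost a1 a2 uo u ux uxx up F (sheet_flip uo (complex_of_real r)) \<psi>"
  shows "cadj (\<phi> x t) ** \<phi> x t = gram_diag (complex_of_real (1 + uo^2 / r^2))"
    and "cadj (\<phi> x t) ** \<psi> x t = gram_antidiag (\<i> * complex_of_real ((r^2 + uo^2) / (r * uo)))"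
proof -
  define z where "z = complex_of_real r"
  define X where "X = (\<lambda>y. Xmat uo z (u y t))"
  define e1 where "e1 = (\<lambda>y. exp (\<i> * h1 a1 a2 uo z y t))"
  define e2 where "e2 = (\<lambda>y. exp (\<i> * h2 a1 a2 uo z y t))"
  define A where "A = (\<lambda>y. Gmat uo up z ** phase_diag (e1 y) (e2 y))"
  define B where "B = (\<lambda>y. Gmat uo up (sheet_flip uo z) ** phase_diag (cnj (e1 y)) (e2 y))"
  have uo_nz: "uo \<noteq> 0"
    using uo by simp
  have d\<phi>: "((\<lambda>y. \<phi> y t) has_vector_derivative X y ** \<phi> y t) (at y)" for y
    using \<phi> by (simp add: jost_def X_def z_def)
  have d\<psi>: "((\<lambda>y. \<psi> y t) has_vector_derivative X y ** \<psi> y t) (at y)" for y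
    using \<psi> by (simp add: jost_def X_def z_def Xmat_sheet_flip[OF uo_nz])
  have skew: "cadj (X y) = - X y" for y
    by (simp add: X_def z_def cadj_Xmat_of_real)
  have lim_\<phi>: "((\<lambda>y. \<phi> y t - A y) \<longlongrightarrow> 0) F"
    using \<phi> by (simp add: jost_def A_def e1_def e2_def z_def expiH_of_real(1))
  have lim_\<psi>: "((\<lambda>y. \<psi> y t - B y) \<longlongrightarrow> 0) F"
    using \<psi> by (simp add: jost_def B_def e1_def e2_def z_def expiH_of_real(2)[OF uo_nz])
  have unit: "cmod (e1 y) = 1" "cmod (e2 y) = 1" for y
    unfolding e1_def e2_def z_def by (rule expiH_of_real(3,4))+
  have "Bfun A F" "Bfun B F"
    by (auto intro!: BfunI always_eventually simp: A_def B_def norm_mult_phase_diag unit)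
  note conservation = cadj_mult_eq_of_asymptotics[OF d\<phi> _ skew lim_\<phi> _ \<open>Bfun A F\<close> _ _ F]
  show "cadj (\<phi> x t) ** \<phi> x t = gram_diag (complex_of_real (1 + uo^2 / r^2))"
    by (rule conservation[OF d\<phi> lim_\<phi> \<open>Bfun A F\<close>])
      (simp add: A_def z_def gram_Gmat_phase_diag(1)[OF uo r up unit])
  show "cadj (\<phi> x t) ** \<psi> x t = gram_antidiag (\<i> * complex_of_real ((r^2 + uo^2) / (r * uo)))"
    by (rule conservation[OF d\<psi> lim_\<psi> \<open>Bfun B F\<close>])
      (simp add: A_def B_def z_def gram_Gmat_phase_diag(2)[OF uo r up unit])
qed

lemma scattering_symmetries_of_real:
  fixes phim phip :: "complex \<Rightarrow> real \<Rightarrow> real \<Rightarrow> cmat3" and S :: "complex \<Rightarrow> cmat3"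
    and um upl :: cvec2 and uo r :: real
  assumes uo: "uo > 0" and r: "r \<noteq> 0" and um: "norm um = uo" and upl: "norm upl = uo"
    and jost_m: "\<forall>z \<in> Z. jost a1 a2 uo u ux uxx um at_bot z (phim z)"
    and jost_p: "\<forall>z \<in> Z. jost a1 a2 uo u ux uxx upl at_top z (phip z)"
    and scat: "\<forall>z \<in> Z. \<forall>x t. phim z x t = phip z x t ** S z"
    and Z: "complex_of_real r \<in> Z" "sheet_flip uo (complex_of_real r) \<in> Z"
  shows "matrix_inv (S r) $ 1 $ 1 = cnj (S r $ 1 $ 1)"
    and "matrix_inv (S r) $ 3 $ 3 = cnj (S r $ 3 $ 3)"
    and "S (sheet_flip uo r) $ 3 $ 3 = S r $ 1 $ 1"
proof -
  define z where "z = complex_of_real r"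
  define z' where "z' = sheet_flip uo z"
  define d where "d = complex_of_real (1 + uo^2 / r^2)"
  define c where "c = \<i> * complex_of_real ((r^2 + uo^2) / (r * uo))"
  have jm: "jost a1 a2 uo u ux uxx um at_bot z (phim z)" "jost a1 a2 uo u ux uxx um at_bot z' (phim z')"
    and jp: "jost a1 a2 uo u ux uxx upl at_top z (phip z)" "jost a1 a2 uo u ux uxx upl at_top z' (phip z')"
    and sc: "phim z 0 0 = phip z 0 0 ** S z" "phim z' 0 0 = phip z' 0 0 ** S z'"
    using jost_m jost_p scat Z by (simp_all add: z_def z'_def)
  have factor: "cadj (phim z 0 0) ** phim w 0 0 = cadj (S z) ** (cadj (phip z 0 0) ** phip w 0 0) ** S w"
    if "phim w 0 0 = phip w 0 0 ** S w" for w
    by (simp add: that sc(1) cadj_matrix_mult matrix_mul_assoc)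
  note gram_m = jost_gram_of_real[OF uo r um trivial_limit_at_bot_linorder jm[unfolded z_def z'_def],
      of 0 0, folded z_def d_def c_def]
  note gram_p = jost_gram_of_real[OF uo r upl trivial_limit_at_top_linorder jp[unfolded z_def z'_def],
      of 0 0, folded z_def d_def c_def]
  have diag: "cadj (S z) ** gram_diag d ** S z = gram_diag d"
    using factor[OF sc(1)] gram_m(1) gram_p(1) by simp
  have antidiag: "cadj (S z) ** gram_antidiag c ** S z' = gram_antidiag c"
    using factor[OF sc(2)] gram_m(2) gram_p(2) by (simp add: z'_def)
  have "d \<noteq> 0"
    unfolding d_def by (metis of_real_eq_0_iff add_pos_nonneg zero_less_one zero_le_divide_iff
        zero_le_power2 less_irrefl)
  have "c \<noteq> 0"
  proof -
    have "(r^2 + uo^2) / (r * uo) \<noteq> 0"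
      using uo r by (simp add: sum_power2_eq_zero_iff)
    then show ?thesis
      unfolding c_def by (simp only: mult_eq_0_iff of_real_eq_0_iff complex_i_not_zero simp_thms)
  qed
  from scattering_entries_of_grams[OF \<open>d \<noteq> 0\<close> \<open>c \<noteq> 0\<close> diag antidiag]
  show "matrix_inv (S r) $ 1 $ 1 = cnj (S r $ 1 $ 1)"
    and "matrix_inv (S r) $ 3 $ 3 = cnj (S r $ 3 $ 3)"
    and "S (sheet_flip uo r) $ 3 $ 3 = S r $ 1 $ 1"
    by (simp_all add: z_def z'_def)
qed

section \<open>Continuation from the real axis\<close>

lemma holomorphic_vanishing_from_real_boundary:
  fixes f :: "complex \<Rightarrow> complex"
  assumes S: "open S" "connected S" and hol: "f holomorphic_on S"
    and e: "0 < e" and c: "Im c = 0" and upper: "ball c e \<inter> {w. 0 < Im w} \<subseteq> S"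
    and cont: "continuous_on (ball c e \<inter> {w. 0 \<le> Im w}) f"
    and zero: "\<And>x. x \<in> ball c e \<Longrightarrow> Im x = 0 \<Longrightarrow> f x = 0"
    and z: "z \<in> S"
  shows "f z = 0"
proof -
  define B where "B = ball c e"
  \<comment> \<open>\<open>g\<close> is continuous across the real axis because \<open>f\<close> vanishes there.\<close>
  define g where "g w = (if Im w \<le> 0 then 0 else f w)" for w
  have "continuous_on B g"
    unfolding g_def
  proof (rule continuous_on_cases_le)
    show "continuous_on {w \<in> B. 0 \<le> Im w} f"
      using cont by (simp add: B_def Int_def conj_commute)
  qed (auto simp: B_def zero intro: continuous_intros)
  moreover have "g holomorphic_on B \<inter> {w. \<i> \<bullet> w < 0}"
    by (rule holomorphic_transform[of "\<lambda>_. 0"]) (auto simp: g_def inner_complex_def)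
  moreover have "g holomorphic_on B \<inter> {w. 0 < \<i> \<bullet> w}"
    by (rule holomorphic_transform[OF holomorphic_on_subset[OF hol]])
      (use upper in \<open>auto simp: B_def g_def inner_complex_def\<close>)
  ultimately have "g holomorphic_on B"
    using holomorphic_on_paste_across_line[of B \<i> g 0] by (simp add: B_def)
  then have g0: "g w = 0" if "w \<in> B" for w
  proof (rule analytic_continuation_open[of "B \<inter> {w. Im w < 0}" B g "\<lambda>_. 0", rotated 5])
    have "c - \<i> * complex_of_real (e/2) \<in> B \<inter> {w. Im w < 0}"
      using c e by (simp add: B_def dist_norm norm_mult)
    then show "B \<inter> {w. Im w < 0} \<noteq> {}" by blast
  qed (use that in \<open>auto simp: B_def g_def open_halfspace_Im_lt open_Int convex_connected\<close>)
  show ?thesis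
  proof (rule analytic_continuation_open[of "B \<inter> {w. Im w > 0}" S f "\<lambda>_. 0", rotated 5])
    have "c + \<i> * complex_of_real (e/2) \<in> B \<inter> {w. Im w > 0}"
      using c e by (simp add: B_def dist_norm norm_mult)
    then show "B \<inter> {w. Im w > 0} \<noteq> {}" by blast
    show "f w = 0" if "w \<in> B \<inter> {w. Im w > 0}" for w
      using g0[of w] that by (simp add: g_def)
  qed (use S hol upper z in \<open>auto simp: B_def open_halfspace_Im_gt open_Int\<close>)
qed

lemma open_Xi1: "open (Xi1 uo)"
  and open_Xi4: "open (Xi4 uo)"
  unfolding Xi1_def Xi4_def by (intro open_Collect_conj open_Collect_less continuous_intros)+

lemma closure_Xi1: "closure (Xi1 uo) = {z. uo \<le> cmod z \<and> 0 \<le> Im z}"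
proof
  show "closure (Xi1 uo) \<subseteq> {z. uo \<le> cmod z \<and> 0 \<le> Im z}"
    by (rule closure_minimal)
      (auto simp: Xi1_def intro!: closed_Collect_conj closed_Collect_le continuous_intros)
  show "{z. uo \<le> cmod z \<and> 0 \<le> Im z} \<subseteq> closure (Xi1 uo)"
  proof (clarsimp simp: closure_approachable)
    fix z e assume z: "uo \<le> cmod z" "0 \<le> Im z" and e: "0 < (e::real)"
    define y where "y = z + \<i> * complex_of_real (e/2)"
    have "Re y = Re z" "Im y = Im z + e / 2"
      by (simp_all add: y_def)
    then have "(cmod y)^2 = (cmod z)^2 + e * Im z + e^2 / 4"
      unfolding cmod_power2 by (simp add: power2_eq_square algebra_simps)
    moreover have "0 \<le> e * Im z" "0 < e^2 / 4"
      using z e by simp_all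
    ultimately have "(cmod z)^2 < (cmod y)^2"
      by linarith
    then have "cmod z < cmod y"
      by (rule power2_less_imp_less) simp
    then have "y \<in> Xi1 uo"
      using z e by (simp add: Xi1_def y_def)
    moreover have "dist y z < e"
      using e by (simp add: y_def dist_norm norm_mult)
    ultimately show "\<exists>y\<in>Xi1 uo. dist y z < e" by blast
  qed
qed

lemma connected_Xi1:
  assumes "0 \<le> uo"
  shows "connected (Xi1 uo)"
proof -
  define polar where "polar = (\<lambda>p. complex_of_real (fst p) * exp (\<i> * complex_of_real (snd p)))"
  have "Xi1 uo = polar ` ({uo<..} \<times> {0<..<pi})"
  proof (intro equalityI subsetI)
    fix z assume z: "z \<in> Xi1 uo"
    then have "0 < Arg z \<and> Arg z < pi"
      using Arg_lt_pi[of z] by (simp add: Xi1_def)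
    moreover have "z = polar (cmod z, Arg z)"
      using rcis_cmod_Arg[of z] by (simp add: polar_def rcis_def cis_conv_exp)
    ultimately show "z \<in> polar ` ({uo<..} \<times> {0<..<pi})"
      using z by (intro image_eqI[of _ _ "(cmod z, Arg z)"]) (auto simp: Xi1_def)
  next
    fix z assume "z \<in> polar ` ({uo<..} \<times> {0<..<pi})"
    then obtain \<rho> \<theta> where "z = polar (\<rho>, \<theta>)" "uo < \<rho>" "0 < \<theta>" "\<theta> < pi"
      by auto
    then show "z \<in> Xi1 uo"
      using assms by (simp add: Xi1_def polar_def norm_mult Im_exp sin_gt_zero)
  qed
  then show ?thesis
    by (simp only: polar_def)
      (intro connected_continuous_image continuous_intros convex_connected convex_Times
        convex_real_interval)
qed

definition holomorphic_upto_boundary :: "(complex \<Rightarrow> complex) \<Rightarrow> complex set \<Rightarrow> bool" where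
  "holomorphic_upto_boundary f A \<longleftrightarrow> f holomorphic_on A \<and> continuous_on (closure A - {0}) f"

lemma eq_on_closure_Xi1_of_real_ray:
  assumes uo: "0 < uo"
    and f: "holomorphic_upto_boundary f (Xi1 uo)" and g: "holomorphic_upto_boundary g (Xi1 uo)"
    and ray: "\<And>x. uo < x \<Longrightarrow> f (complex_of_real x) = g (complex_of_real x)"
    and z: "z \<in> closure (Xi1 uo)"
  shows "f z = g z"
proof -
  define h where "h = (\<lambda>w. f w - g w)"
  have "0 \<notin> closure (Xi1 uo)"
    using uo by (simp add: closure_Xi1)
  then have cont: "continuous_on (closure (Xi1 uo)) h"
    using f g by (simp add: h_def holomorphic_upto_boundary_def continuous_on_diff)
  have "h w = 0" if "w \<in> Xi1 uo" for w
  proof (rule holomorphic_vanishing_from_real_boundary[OF open_Xi1 connected_Xi1 _ _ _ _ _ _ that])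
    show "h holomorphic_on Xi1 uo"
      using f g by (simp add: h_def holomorphic_upto_boundary_def holomorphic_intros)
    have big: "uo < cmod w" if "w \<in> ball (complex_of_real (uo + 1)) (1/2)" for w
      using that norm_triangle_sub[of "complex_of_real (uo + 1)" w] uo by (simp add: dist_norm)
    show "ball (complex_of_real (uo + 1)) (1/2) \<inter> {w. 0 < Im w} \<subseteq> Xi1 uo"
      using big by (auto simp: Xi1_def)
    show "continuous_on (ball (complex_of_real (uo + 1)) (1/2) \<inter> {w. 0 \<le> Im w}) h"
      by (rule continuous_on_subset[OF cont]) (use big in \<open>force simp: closure_Xi1\<close>)
    show "h x = 0" if "x \<in> ball (complex_of_real (uo + 1)) (1/2)" "Im x = 0" for x
    proof -
      have "x = complex_of_real (Re x)" "uo < Re x"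
        using that abs_Re_le_cmod[of "complex_of_real (uo + 1) - x"]
        by (auto simp: complex_eq_iff dist_norm)
      then show ?thesis
        using ray[of "Re x"] by (simp add: h_def)
    qed
  qed (use uo in auto)
  then have "h z = 0"
    by (rule continuous_constant_on_closure[OF cont _ z])
  then show ?thesis
    by (simp add: h_def)
qed

lemma closure_cnj_image: "closure (cnj ` A) = cnj ` closure A"
  by (rule closure_injective_linear_image[symmetric])
    (auto simp: bounded_linear_cnj bounded_linear.linear inj_on_def)

lemma Xi2_eq_cnj_image: "Xi2 uo = cnj ` Xi1 uo"
  and Xi3_eq_cnj_image: "Xi3 uo = cnj ` Xi4 uo"
  by (auto simp: Xi1_def Xi2_def Xi3_def Xi4_def image_cnj_conv_vimage_cnj)

lemma holomorphic_upto_boundary_cnj: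
  assumes "open A" and f: "holomorphic_upto_boundary f (cnj ` A)"
  shows "holomorphic_upto_boundary (\<lambda>z. cnj (f (cnj z))) A"
  unfolding holomorphic_upto_boundary_def
proof
  show "(\<lambda>z. cnj (f (cnj z))) holomorphic_on A"
    using holomorphic_on_compose_cnj_cnj[OF _ \<open>open A\<close>] f
    by (simp add: holomorphic_upto_boundary_def o_def)
  have "continuous_on (closure A - {0}) (\<lambda>z. f (cnj z))"
  proof (rule continuous_on_compose2[of "cnj ` closure A - {0}" f])
    show "continuous_on (cnj ` closure A - {0}) f"
      using f by (simp add: holomorphic_upto_boundary_def closure_cnj_image)
  qed (auto intro: continuous_intros)
  then show "continuous_on (closure A - {0}) (\<lambda>z. cnj (f (cnj z)))"
    by (rule continuous_on_cnj)
qed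

lemma holomorphic_on_sheet_flip: "0 \<notin> A \<Longrightarrow> sheet_flip uo holomorphic_on A"
  and continuous_on_sheet_flip: "0 \<notin> A \<Longrightarrow> continuous_on A (sheet_flip uo)"
  unfolding sheet_flip_def[abs_def] by (auto intro!: holomorphic_intros continuous_intros)

lemma sheet_flip_Xi1:
  assumes "0 < uo" "z \<in> Xi1 uo"
  shows "sheet_flip uo z \<in> Xi4 uo"
proof -
  have "z \<noteq> 0" "uo < cmod z" "0 < Im z"
    using assms by (auto simp: Xi1_def)
  moreover have "cmod (sheet_flip uo z) = uo^2 / cmod z"
    by (simp add: sheet_flip_def norm_divide norm_power)
  moreover have "Im (sheet_flip uo z) = uo^2 * Im z / (cmod z)^2"
    by (simp add: sheet_flip_def Im_divide cmod_power2)
  ultimately show ?thesis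
    using assms(1) by (simp add: Xi4_def divide_less_eq power2_eq_square)
qed

lemma sheet_flip_closure_Xi1:
  assumes "0 < uo" "z \<in> closure (Xi1 uo)"
  shows "sheet_flip uo z \<in> closure (Xi4 uo) - {0}"
proof -
  have nz: "0 \<notin> closure (Xi1 uo)"
    using assms(1) by (simp add: closure_Xi1)
  have "sheet_flip uo ` closure (Xi1 uo) \<subseteq> closure (Xi4 uo)"
  proof (rule image_closure_subset)
    show "continuous_on (closure (Xi1 uo)) (sheet_flip uo)"
      using nz by (rule continuous_on_sheet_flip)
  qed (use sheet_flip_Xi1[OF assms(1)] closure_subset in auto)
  moreover have "sheet_flip uo z \<noteq> 0"
    using assms nz by (auto simp: sheet_flip_def)
  ultimately show ?thesis
    using assms(2) by auto
qed

lemma holomorphic_upto_boundary_sheet_flip: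
  assumes uo: "0 < uo" and f: "holomorphic_upto_boundary f (Xi4 uo)"
  shows "holomorphic_upto_boundary (\<lambda>z. f (sheet_flip uo z)) (Xi1 uo)"
  unfolding holomorphic_upto_boundary_def
proof
  have nz: "0 \<notin> closure (Xi1 uo)"
    using uo by (simp add: closure_Xi1)
  then have "sheet_flip uo holomorphic_on Xi1 uo"
    using closure_subset by (blast intro: holomorphic_on_sheet_flip)
  then have "(f \<circ> sheet_flip uo) holomorphic_on Xi1 uo"
  proof (rule holomorphic_on_compose_gen)
    show "f holomorphic_on Xi4 uo"
      using f by (simp add: holomorphic_upto_boundary_def)
    show "sheet_flip uo ` Xi1 uo \<subseteq> Xi4 uo"
      using sheet_flip_Xi1[OF uo] by blast
  qed
  then show "(\<lambda>z. f (sheet_flip uo z)) holomorphic_on Xi1 uo"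
    by (simp add: o_def)
  show "continuous_on (closure (Xi1 uo) - {0}) (\<lambda>z. f (sheet_flip uo z))"
  proof (rule continuous_on_compose2[of "closure (Xi4 uo) - {0}" f])
    show "continuous_on (closure (Xi4 uo) - {0}) f"
      using f by (simp add: holomorphic_upto_boundary_def)
    show "continuous_on (closure (Xi1 uo) - {0}) (sheet_flip uo)"
      by (rule continuous_on_sheet_flip) blast
    show "sheet_flip uo ` (closure (Xi1 uo) - {0}) \<subseteq> closure (Xi4 uo) - {0}"
      by (intro image_subsetI sheet_flip_closure_Xi1[OF uo]) blast
  qed
qed

lemma of_real_in_closure_Xi:
  assumes "0 < uo" "uo < x"
  shows "complex_of_real x \<in> closure (Xi1 uo)" "complex_of_real x \<in> closure (Xi2 uo)"
    and "sheet_flip uo x \<in> closure (Xi3 uo)" "sheet_flip uo x \<in> closure (Xi4 uo)"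
proof -
  show x: "complex_of_real x \<in> closure (Xi1 uo)"
    using assms by (simp add: closure_Xi1)
  then show "complex_of_real x \<in> closure (Xi2 uo)"
    unfolding Xi2_eq_cnj_image closure_cnj_image by (simp add: image_cnj_conv_vimage_cnj)
  show flip: "sheet_flip uo x \<in> closure (Xi4 uo)"
    using sheet_flip_closure_Xi1[OF assms(1) x] by simp
  then show "sheet_flip uo x \<in> closure (Xi3 uo)"
    unfolding Xi3_eq_cnj_image closure_cnj_image
    by (simp add: image_cnj_conv_vimage_cnj sheet_flip_of_real)
qed

lemma of_real_in_Sigma_spec:
  "r \<noteq> 0 \<Longrightarrow> complex_of_real r \<in> Sigma_spec uo - {\<i> * complex_of_real uo, - \<i> * complex_of_real uo}"
  unfolding Sigma_spec_def by (simp add: complex_eq_iff)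

lemma sheet_flip_in_Sigma_spec:
  "uo \<noteq> 0 \<Longrightarrow> r \<noteq> 0 \<Longrightarrow>
    sheet_flip uo (complex_of_real r) \<in> Sigma_spec uo - {\<i> * complex_of_real uo, - \<i> * complex_of_real uo}"
  unfolding sheet_flip_of_real by (rule of_real_in_Sigma_spec) simp

lemma extensions_agree_on_real_ray:
  fixes S :: "complex \<Rightarrow> cmat3" and s11 b11 b33 s33 :: "complex \<Rightarrow> complex" and uo x :: real
  assumes uo: "0 < uo" and x: "uo < x"
    and S: "\<And>r. (r::real) \<noteq> 0 \<Longrightarrow> matrix_inv (S r) $ 1 $ 1 = cnj (S r $ 1 $ 1)"
      "\<And>r. (r::real) \<noteq> 0 \<Longrightarrow> matrix_inv (S r) $ 3 $ 3 = cnj (S r $ 3 $ 3)"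
      "\<And>r. (r::real) \<noteq> 0 \<Longrightarrow> S (sheet_flip uo r) $ 3 $ 3 = S r $ 1 $ 1"
    and s11: "\<forall>z \<in> closure (Xi1 uo) \<inter> (Sigma_spec uo - {\<i> * uo, - \<i> * uo}). s11 z = S z $ 1 $ 1"
    and b11: "\<forall>z \<in> closure (Xi2 uo) \<inter> (Sigma_spec uo - {\<i> * uo, - \<i> * uo}).
                b11 z = matrix_inv (S z) $ 1 $ 1"
    and b33: "\<forall>z \<in> closure (Xi3 uo) \<inter> (Sigma_spec uo - {\<i> * uo, - \<i> * uo}).
                b33 z = matrix_inv (S z) $ 3 $ 3"
    and s33: "\<forall>z \<in> closure (Xi4 uo) \<inter> (Sigma_spec uo - {\<i> * uo, - \<i> * uo}). s33 z = S z $ 3 $ 3"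
  shows "cnj (b11 (cnj x)) = s11 x" and "s11 x = s33 (sheet_flip uo x)"
    and "cnj (b33 (cnj (sheet_flip uo x))) = s33 (sheet_flip uo x)"
proof -
  have "uo \<noteq> 0" "x \<noteq> 0" "- (uo^2) / x \<noteq> 0"
    using uo x by auto
  note closures = of_real_in_closure_Xi[OF uo x]
    and spec = of_real_in_Sigma_spec[OF \<open>x \<noteq> 0\<close>] sheet_flip_in_Sigma_spec[OF \<open>uo \<noteq> 0\<close> \<open>x \<noteq> 0\<close>]
  have "s11 x = S x $ 1 $ 1" "b11 x = matrix_inv (S x) $ 1 $ 1"
    using s11 b11 closures(1,2) spec(1) by blast+
  moreover have "s33 (sheet_flip uo x) = S (sheet_flip uo x) $ 3 $ 3"
    "b33 (sheet_flip uo x) = matrix_inv (S (sheet_flip uo x)) $ 3 $ 3"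
    using s33 b33 closures(3,4) spec(2) by blast+
  moreover have "cnj (sheet_flip uo x) = sheet_flip uo x"
    by (simp add: sheet_flip_of_real)
  ultimately show "cnj (b11 (cnj x)) = s11 x" "s11 x = s33 (sheet_flip uo x)"
    "cnj (b33 (cnj (sheet_flip uo x))) = s33 (sheet_flip uo x)"
    using S(1,3)[OF \<open>x \<noteq> 0\<close>] S(2)[OF \<open>- (uo^2) / x \<noteq> 0\<close>, folded sheet_flip_of_real]
    by simp_all
qed

theorem proposition6:
  fixes a1 a2 uo hm hp :: real
    and uvec :: cvec2
    and u ux uxx uxxx ut :: "real \<Rightarrow> real \<Rightarrow> cvec2"
    and phim phip :: "complex \<Rightarrow> real \<Rightarrow> real \<Rightarrow> cmat3"
    and S :: "complex \<Rightarrow> cmat3"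
    and s11 b11 b33 s33 :: "complex \<Rightarrow> complex"
    and zo :: complex
  defines "um \<equiv> csv (exp (\<i> * complex_of_real hm)) uvec"
      and "upl \<equiv> csv (exp (\<i> * complex_of_real hp)) uvec"
  assumes uo_pos: "uo > 0"
    and uvec_norm: "norm uvec = uo"
    and pde: "solves_eq a1 a2 uo u ux uxx uxxx ut"
    and lim_m: "\<forall>t. ((\<lambda>x. u x t) \<longlongrightarrow> um) at_bot"
    and lim_p: "\<forall>t. ((\<lambda>x. u x t) \<longlongrightarrow> upl) at_top"
    and L1_m: "\<forall>t a. (\<lambda>x. u x t - um) absolutely_integrable_on {..a}"
    and L1_p: "\<forall>t a. (\<lambda>x. u x t - upl) absolutely_integrable_on {a..}"
    and jost_m: "\<forall>z \<in> Sigma_spec uo - {\<i> * uo, - \<i> * uo}.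
                   jost a1 a2 uo u ux uxx um at_bot z (phim z)"
    and jost_p: "\<forall>z \<in> Sigma_spec uo - {\<i> * uo, - \<i> * uo}.
                   jost a1 a2 uo u ux uxx upl at_top z (phip z)"
    and scat: "\<forall>z \<in> Sigma_spec uo - {\<i> * uo, - \<i> * uo}. \<forall>x t.
                   phim z x t = phip z x t ** S z"
    and s11_ext: "s11 holomorphic_on Xi1 uo" "continuous_on (closure (Xi1 uo) - {0}) s11"
                 "\<forall>z \<in> closure (Xi1 uo) \<inter> (Sigma_spec uo - {\<i> * uo, - \<i> * uo}).
                     s11 z = S z $ 1 $ 1"
    and b11_ext: "b11 holomorphic_on Xi2 uo" "continuous_on (closure (Xi2 uo) - {0}) b11"
                 "\<forall>z \<in> closure (Xi2 uo) \<inter> (Sigma_spec uo - {\<i> * uo, - \<i> * uo}).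
                     b11 z = matrix_inv (S z) $ 1 $ 1"
    and b33_ext: "b33 holomorphic_on Xi3 uo" "continuous_on (closure (Xi3 uo) - {0}) b33"
                 "\<forall>z \<in> closure (Xi3 uo) \<inter> (Sigma_spec uo - {\<i> * uo, - \<i> * uo}).
                     b33 z = matrix_inv (S z) $ 3 $ 3"
    and s33_ext: "s33 holomorphic_on Xi4 uo" "continuous_on (closure (Xi4 uo) - {0}) s33"
                 "\<forall>z \<in> closure (Xi4 uo) \<inter> (Sigma_spec uo - {\<i> * uo, - \<i> * uo}).
                     s33 z = S z $ 3 $ 3"
    and zo: "Im zo > 0" "cmod zo \<ge> uo"
  shows "(b11 (cnj zo) = 0 \<longleftrightarrow> s11 zo = 0)
       \<and> (s11 zo = 0 \<longleftrightarrow> b33 (- complex_of_real (uo^2) / cnj zo) = 0)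
       \<and> (b33 (- complex_of_real (uo^2) / cnj zo) = 0 \<longleftrightarrow> s33 (- complex_of_real (uo^2) / zo) = 0)"
proof -
  have uo_nz: "uo \<noteq> 0"
    using uo_pos by simp
  have backgrounds: "norm um = uo" "norm upl = uo"
    using uvec_norm by (simp_all add: um_def upl_def norm_csv norm_exp_i_times)
  have S_real: "matrix_inv (S r) $ 1 $ 1 = cnj (S r $ 1 $ 1)"
      "matrix_inv (S r) $ 3 $ 3 = cnj (S r $ 3 $ 3)" "S (sheet_flip uo r) $ 3 $ 3 = S r $ 1 $ 1"
    if "r \<noteq> 0" for r :: real
    using scattering_symmetries_of_real[OF uo_pos that backgrounds jost_m jost_p scat
        of_real_in_Sigma_spec[OF that] sheet_flip_in_Sigma_spec[OF uo_nz that]] by simp_all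
  note ray = extensions_agree_on_real_ray[OF uo_pos _ S_real s11_ext(3) b11_ext(3) b33_ext(3)
      s33_ext(3)]
  have given: "holomorphic_upto_boundary s11 (Xi1 uo)" "holomorphic_upto_boundary b11 (cnj ` Xi1 uo)"
    "holomorphic_upto_boundary s33 (Xi4 uo)" "holomorphic_upto_boundary b33 (cnj ` Xi4 uo)"
    using s11_ext(1,2) b11_ext(1,2) s33_ext(1,2) b33_ext(1,2)
    by (simp_all add: holomorphic_upto_boundary_def Xi2_eq_cnj_image Xi3_eq_cnj_image)
  note reflected = holomorphic_upto_boundary_cnj[OF open_Xi1 given(2)]
    holomorphic_upto_boundary_cnj[OF open_Xi4 given(4)]
  note flipped = holomorphic_upto_boundary_sheet_flip[OF uo_pos given(3)]
    holomorphic_upto_boundary_sheet_flip[OF uo_pos reflected(2)]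
  have "zo \<in> closure (Xi1 uo)"
    using zo by (simp add: closure_Xi1)
  note continuation = eq_on_closure_Xi1_of_real_ray[OF uo_pos _ _ _ this]
  have "cnj (b11 (cnj zo)) = s11 zo" "s11 zo = s33 (sheet_flip uo zo)"
    "cnj (b33 (cnj (sheet_flip uo zo))) = s33 (sheet_flip uo zo)"
    using continuation[OF reflected(1) given(1)] continuation[OF given(1) flipped(1)]
      continuation[OF flipped(2,1)] ray
    by auto
  then show ?thesis
    by (metis complex_cnj_zero_iff sheet_flip_def complex_cnj_divide complex_cnj_minus
        complex_cnj_complex_of_real)
qed

end
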